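(* Let $(V,\vec v)$ be a valid epistemic state on $\Omega$, let $V_A$ be a measurement on subsystem $A$ with outcome $\vec v_{A=1}$ and $V_B$ a measurement on subsystem $B$ with outcome $\vec v_{B=1}$, and let $V_{\text{commute},A}=\{\vec f\in V:[\vec f,\vec g]=0\ \forall\vec g\in V_A\}$. The inference "$A=1\implies B=1$" can be made if and only if (1) $V_B\subset V_{\text{commute},A}\oplus V_A$, and (2) $(V_{\text{commute},A}^\perp+\vec v)\cap(V_A^\perp+\vec v_{A=1})\cap(V_B^\perp+\vec v_{B=1})\neq\emptyset$.
   Context: Toy theory (quadrature formalism): $\Omega=\mathbb{Z}_d^{2n}$ or $\mathbb{R}^{2n}$, coordinates $(q_1,p_1,\dots)$; observables $\vec f\in\Omega$ with value $\vec f^T\vec m$; Poisson bracket $[\vec f,\vec g]=\sum_i(f_{2i-1}g_{2i}-f_{2i}g_{2i-1})$; $V^\perp=\{\vec m:\vec f^T\vec m=0\ \forall\vec f\in V\}$. Valid epistemic state $(V,\vec v)$: $V$ isotropic, compatible ontic states $V^\perp+\vec v$ uniformly distributed. A measurement is an isotropic $V_\pi$, outcome $\vec v_\pi$ occurs iff the ontic state lies in $V_\pi^\perp+\vec v_\pi$; an outcome occurs with certainty if it has probability 1. Measurements "on subsystem $A$/$B$" have all vectors supported on the coordinates of that subsystem. Update rule: after obtaining $\vec v_{A=1}$ in $V_A$, the state becomes $(V_{\text{commute},A}\oplus V_A,\vec v')$ with $\vec v'\in(V_A^\perp+\vec v_{A=1})\cap(V_{\text{commute},A}^\perp+\vec v)$.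 The inference "$A=1\implies B=1$" can be made if this updated state is defined (the intersection is nonempty) and in it the outcome $\vec v_{B=1}$ of $V_B$ occurs with certainty. *)

theory Defs
  imports Main
begin

text \<open>Phase space of the toy theory: modes indexed by a finite type 'm, each with
a position-like (Q) and momentum-like (P) quadrature; coordinates in a field 'a
(Z_d with d prime, or the reals).\<close>

datatype quad = Q | P

type_synonym ('a, 'm) phase = "'m \<times> quad \<Rightarrow> 'a"

definition pzero :: "('a::field, 'm) phase" where
  "pzero = (\<lambda>x. 0)"

definition padd :: "('a::field, 'm) phase \<Rightarrow> ('a, 'm) phase \<Rightarrow> ('a, 'm) phase" where
  "padd f g = (\<lambda>x. f x + g x)"

definition psmult :: "'a::field \<Rightarrow> ('a, 'm) phase \<Rightarrow> ('a, 'm) phase" where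
  "psmult c f = (\<lambda>x. c * f x)"

text \<open>Value of observable f at ontic state m: f^T m.\<close>
definition val :: "('a::field, 'm::finite) phase \<Rightarrow> ('a, 'm) phase \<Rightarrow> 'a" where
  "val f m = (\<Sum>i\<in>UNIV. f (i, Q) * m (i, Q) + f (i, P) * m (i, P))"

definition pbracket :: "('a::field, 'm::finite) phase \<Rightarrow> ('a, 'm) phase \<Rightarrow> 'a" where
  "pbracket f g = (\<Sum>i\<in>UNIV. f (i, Q) * g (i, P) - f (i, P) * g (i, Q))"

definition is_subspace :: "('a::field, 'm) phase set \<Rightarrow> bool" where
  "is_subspace V \<longleftrightarrow> pzero \<in> V \<and> (\<forall>f\<in>V. \<forall>g\<in>V. padd f g \<in> V)
     \<and> (\<forall>c f. f \<in> V \<longrightarrow> psmult c f \<in> V)"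

definition isotropic :: "('a::field, 'm::finite) phase set \<Rightarrow> bool" where
  "isotropic V \<longleftrightarrow> is_subspace V \<and> (\<forall>f\<in>V. \<forall>g\<in>V. pbracket f g = 0)"

definition perp :: "('a::field, 'm::finite) phase set \<Rightarrow> ('a, 'm) phase set" where
  "perp V = {m. \<forall>f\<in>V. val f m = 0}"

definition coset :: "('a::field, 'm) phase set \<Rightarrow> ('a, 'm) phase \<Rightarrow> ('a, 'm) phase set" where
  "coset W v = (\<lambda>w. padd w v) ` W"

definition sumsp :: "('a::field, 'm) phase set \<Rightarrow> ('a, 'm) phase set \<Rightarrow> ('a, 'm) phase set" where
  "sumsp U W = {padd f g | f g. f \<in> U \<and> g \<in> W}"

definition valid_state :: "('a::field, 'm::finite) phase set \<Rightarrow> ('a, 'm) phase \<Rightarrow> bool" where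
  "valid_state V v \<longleftrightarrow> isotropic V"

definition supported_on :: "'m set \<Rightarrow> ('a::field, 'm) phase \<Rightarrow> bool" where
  "supported_on S f \<longleftrightarrow> (\<forall>i. i \<notin> S \<longrightarrow> f (i, Q) = 0 \<and> f (i, P) = 0)"

definition measurement_on :: "'m set \<Rightarrow> ('a::field, 'm::finite) phase set \<Rightarrow> bool" where
  "measurement_on S V\<^sub>\<pi> \<longleftrightarrow> isotropic V\<^sub>\<pi> \<and> (\<forall>f\<in>V\<^sub>\<pi>. supported_on S f)"

text \<open>Outcome v_pi of measurement V_pi occurs with probability 1 in state (V,v):
the uniform distribution on V^perp + v is concentrated on V_pi^perp + v_pi, i.e.
the former is contained in the latter.\<close>
definition occurs_certainly ::
  "('a::field, 'm::finite) phase set \<Rightarrow> ('a, 'm) phase \<Rightarrow> ('a, 'm) phase set \<Rightarrow> ('a, 'm) phase \<Rightarrow> bool" where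
  "occurs_certainly V v V\<^sub>\<pi> v\<^sub>\<pi> \<longleftrightarrow> coset (perp V) v \<subseteq> coset (perp V\<^sub>\<pi>) v\<^sub>\<pi>"

definition commute_part :: "('a::field, 'm::finite) phase set \<Rightarrow> ('a, 'm) phase set \<Rightarrow> ('a, 'm) phase set" where
  "commute_part V VA = {f \<in> V. \<forall>g\<in>VA. pbracket f g = 0}"

text \<open>The inference A=1 ==> B=1: the updated state (V_commute,A \<oplus> V_A, v') is defined
(the admissible set for v' is nonempty) and, for it, outcome vB of VB occurs with
certainty (for any admissible choice of v').\<close>
definition can_infer ::
  "('a::field, 'm::finite) phase set \<Rightarrow> ('a, 'm) phase \<Rightarrow> ('a, 'm) phase set \<Rightarrow> ('a, 'm) phase
   \<Rightarrow> ('a, 'm) phase set \<Rightarrow> ('a, 'm) phase \<Rightarrow> bool" where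
  "can_infer V v VA vA VB vB \<longleftrightarrow>
     (let W = commute_part V VA;
          S = coset (perp VA) vA \<inter> coset (perp W) v
      in S \<noteq> {} \<and> (\<forall>v'\<in>S. occurs_certainly (sumsp W VA) v' VB vB))"

end

theory Submission
  imports Defs "HOL-Library.Function_Algebras" HOL.Vector_Spaces
begin

text \<open>Put \<open>U = V\<^sub>c\<^sub>o\<^sub>m\<^sub>m\<^sub>u\<^sub>t\<^sub>e \<oplus> V\<^sub>A\<close>. Every admissible updated state has ontic support
a coset \<open>perp U + v'\<close>, and such a coset lies in \<open>perp V\<^sub>B + v\<^sub>B\<close> iff
\<open>perp U \<subseteq> perp V\<^sub>B\<close> and \<open>v' \<in> perp V\<^sub>B + v\<^sub>B\<close>. In the finite-dimensional phase space
\<open>perp (perp U) = U\<close>, so the first condition is \<open>V\<^sub>B \<subseteq> U\<close>. Once \<open>V\<^sub>B \<subseteq> U\<close>, all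
admissible \<open>v'\<close> take the same values on \<open>V\<^sub>B\<close>, so they all lie in \<open>perp V\<^sub>B + v\<^sub>B\<close> as
soon as one of them does.\<close>

lemma UNIV_quad: "UNIV = {Q, P}"
  using quad.exhaust by auto

instance quad :: finite
  by standard (simp add: UNIV_quad)

lemma padd_eq_plus: "padd f g = f + g"
  by (simp add: padd_def plus_fun_def)

lemma pzero_eq_zero: "pzero = 0"
  by (simp add: pzero_def zero_fun_def)

global_interpretation phase: vector_space "psmult :: 'a::field \<Rightarrow> ('a, 'm) phase \<Rightarrow> ('a, 'm) phase"
  by unfold_locales (auto simp: psmult_def algebra_simps)

lemma is_subspace_iff_subspace: "is_subspace U \<longleftrightarrow> phase.subspace U"
  unfolding is_subspace_def phase.subspace_def pzero_eq_zero padd_eq_plus by blast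

lemma val_eq_sum: "val f m = (\<Sum>k\<in>UNIV. f k * m k)"
proof -
  have "val f m = (\<Sum>i\<in>UNIV. \<Sum>q\<in>UNIV. f (i, q) * m (i, q))"
    by (simp add: val_def UNIV_quad)
  also have "\<dots> = (\<Sum>k\<in>UNIV. f k * m k)"
    unfolding sum.cartesian_product UNIV_Times_UNIV by (simp add: case_prod_beta')
  finally show ?thesis .
qed

lemma val_sym: "val f m = val m f"
  by (simp add: val_def mult.commute)

lemma val_add_left: "val (f + g) m = val f m + val g m"
  by (simp add: val_eq_sum sum.distrib distrib_right)

lemma val_add_right: "val f (m + n) = val f m + val f n"
  by (simp add: val_eq_sum sum.distrib distrib_left)

lemma val_diff_right: "val f (m - n) = val f m - val f n"
  by (simp add: val_eq_sum sum_subtractf right_diff_distrib)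

definition unit_phase :: "'m \<times> quad \<Rightarrow> ('a::field, 'm) phase" where
  "unit_phase k = (\<lambda>j. if j = k then 1 else 0)"

lemma phase_expansion: "f = (\<Sum>k\<in>UNIV. psmult (f k) (unit_phase k))"
  for f :: "('a::field, 'm::finite) phase"
proof
  fix j
  have "(\<Sum>k\<in>UNIV. psmult (f k) (unit_phase k)) j = (\<Sum>k\<in>UNIV. f k * unit_phase k j)"
    using sum_comp_morphism[of "\<lambda>h. h j" "\<lambda>k. psmult (f k) (unit_phase k)" UNIV]
    by (simp add: psmult_def comp_def)
  also have "\<dots> = f j"
    by (simp add: unit_phase_def if_distrib[of "(*) _"] eq_commute[of j] cong: if_cong)
  finally show "f j = (\<Sum>k\<in>UNIV. psmult (f k) (unit_phase k)) j"
    by simp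
qed

lemma linear_functional_eq_val:
  fixes g :: "('a::field, 'm::finite) phase \<Rightarrow> 'a"
  assumes "Vector_Spaces.linear psmult (*) g"
  shows "g f = val f (\<lambda>k. g (unit_phase k))"
proof -
  interpret linear psmult "(*)" g by fact
  have "g f = g (\<Sum>k\<in>UNIV. psmult (f k) (unit_phase k))"
    using phase_expansion[of f] by simp
  also have "\<dots> = (\<Sum>k\<in>UNIV. f k * g (unit_phase k))"
    by (simp add: sum scale)
  finally show ?thesis
    by (simp add: val_eq_sum)
qed

lemma (in vector_space) separating_functional:
  assumes "subspace U" and "x \<notin> U"
  obtains g :: "'b \<Rightarrow> 'a" where "Vector_Spaces.linear scale (*) g" "\<forall>u\<in>U. g u = 0" "g x = 1"
proof -
  interpret pair: vector_space_pair scale "(*) :: 'a \<Rightarrow> 'a \<Rightarrow> 'a"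
    by unfold_locales (auto simp: algebra_simps)
  obtain B where B: "B \<subseteq> U" "independent B" "U \<subseteq> span B"
    using maximal_independent_subset by blast
  have span_B: "span B = U"
    using B assms(1) span_minimal by blast
  have "independent (insert x B)"
    using B span_B assms(2) independent_insertI by blast
  then obtain g where g: "Vector_Spaces.linear scale (*) g"
    and g_basis: "\<forall>y\<in>insert x B. g y = (if y = x then 1 else 0)"
    using pair.linear_independent_extend[of "insert x B" "\<lambda>y. if y = x then 1 else 0"] by blast
  have "\<forall>y\<in>B. g y = 0"
    using g_basis B(1) assms(2) by auto
  then have "\<forall>u\<in>U. g u = 0"
    using pair.linear_eq_0_on_span[OF g] span_B by blast
  moreover have "g x = 1"
    using g_basis by simp
  ultimately show ?thesis
    using that g by blast
qed

lemma subset_perp_perp: "U \<subseteq> perp (perp U)"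
  unfolding perp_def by (auto simp: val_sym)

lemma perp_perp_subset:
  assumes "is_subspace U"
  shows "perp (perp U) \<subseteq> U"
proof
  fix x assume x: "x \<in> perp (perp U)"
  show "x \<in> U"
  proof (rule ccontr)
    assume "x \<notin> U"
    then obtain g where g: "Vector_Spaces.linear psmult (*) g" "\<forall>u\<in>U. g u = 0" "g x = 1"
      using phase.separating_functional[of U x] assms unfolding is_subspace_iff_subspace by blast
    define m where "m = (\<lambda>k. g (unit_phase k))"
    have g_val: "g f = val f m" for f
      unfolding m_def by (rule linear_functional_eq_val[OF g(1)])
    have "m \<in> perp U"
      unfolding perp_def using g(2) g_val by simp
    then have "val m x = 0"
      using x unfolding perp_def by blast
    moreover have "val m x = 1"
      using g(3) g_val[of x] val_sym[of x m] by simp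
    ultimately show False
      by simp
  qed
qed

lemma perp_antimono: "U \<subseteq> U' \<Longrightarrow> perp U' \<subseteq> perp U"
  unfolding perp_def by auto

lemma perp_subset_perp_iff:
  assumes "is_subspace U"
  shows "perp U \<subseteq> perp U' \<longleftrightarrow> U' \<subseteq> U"
  using perp_antimono[of U' U] perp_antimono[of "perp U" "perp U'"]
    subset_perp_perp[of U'] perp_perp_subset[OF assms] by blast

lemma mem_coset_perp_iff: "y \<in> coset (perp W) v \<longleftrightarrow> (\<forall>f\<in>W. val f y = val f v)"
proof
  assume "y \<in> coset (perp W) v"
  then obtain w where "w \<in> perp W" "y = w + v"
    unfolding coset_def padd_eq_plus by auto
  then show "\<forall>f\<in>W. val f y = val f v"
    by (simp add: val_add_right perp_def)
next
  assume "\<forall>f\<in>W. val f y = val f v"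
  then have "y - v \<in> perp W"
    by (simp add: perp_def val_diff_right)
  then show "y \<in> coset (perp W) v"
    unfolding coset_def padd_eq_plus by (rule rev_image_eqI) simp
qed

lemma occurs_certainly_iff:
  assumes "is_subspace U"
  shows "occurs_certainly U v U' w \<longleftrightarrow> U' \<subseteq> U \<and> v \<in> coset (perp U') w"
proof
  assume certain: "occurs_certainly U v U' w"
  then have v: "v \<in> coset (perp U') w"
    unfolding occurs_certainly_def by (auto simp: mem_coset_perp_iff)
  have "perp U \<subseteq> perp U'"
  proof
    fix m assume "m \<in> perp U"
    then have "m + v \<in> coset (perp U) v"
      unfolding mem_coset_perp_iff by (simp add: val_add_right perp_def)
    then have "m + v \<in> coset (perp U') w"
      using certain unfolding occurs_certainly_def by blast
    with v show "m \<in> perp U'"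
      unfolding mem_coset_perp_iff by (simp add: val_add_right perp_def)
  qed
  with v show "U' \<subseteq> U \<and> v \<in> coset (perp U') w"
    using perp_subset_perp_iff[OF assms] by blast
next
  assume "U' \<subseteq> U \<and> v \<in> coset (perp U') w"
  then show "occurs_certainly U v U' w"
    unfolding occurs_certainly_def by (auto simp: mem_coset_perp_iff subset_iff)
qed

lemma val_eq_on_sumsp:
  assumes "x \<in> coset (perp U) u \<inter> coset (perp W) w"
    and "y \<in> coset (perp U) u \<inter> coset (perp W) w"
    and "f \<in> sumsp U W"
  shows "val f x = val f y"
proof -
  obtain g h where "g \<in> U" "h \<in> W" "f = g + h"
    using assms(3) unfolding sumsp_def padd_eq_plus by blast
  with assms(1,2) show ?thesis
    by (simp add: mem_coset_perp_iff val_add_left)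
qed

lemma is_subspace_sumsp:
  "is_subspace U \<Longrightarrow> is_subspace W \<Longrightarrow> is_subspace (sumsp U W)"
  unfolding is_subspace_iff_subspace sumsp_def padd_eq_plus by (rule phase.subspace_sums)

lemma is_subspace_commute_part:
  fixes V VA :: "('a::field, 'm::finite) phase set"
  assumes "is_subspace V"
  shows "is_subspace (commute_part V VA)"
proof -
  have "pbracket (f + g) h = pbracket f h + pbracket g h" for f g h :: "('a, 'm) phase"
    by (simp add: pbracket_def sum.distrib[symmetric] algebra_simps)
  moreover have "pbracket (psmult c f) h = c * pbracket f h" for f h :: "('a, 'm) phase" and c
    by (simp add: pbracket_def psmult_def sum_distrib_left algebra_simps)
  moreover have "pbracket 0 h = 0" for h :: "('a, 'm) phase"
    by (simp add: pbracket_def)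
  ultimately show ?thesis
    using assms unfolding is_subspace_iff_subspace phase.subspace_def commute_part_def by auto
qed

theorem lemma7:
  fixes V VA VB :: "('a::field, 'm::finite) phase set"
    and v vA vB :: "('a, 'm) phase"
    and SA SB :: "'m set"
  assumes "valid_state V v"
    and "measurement_on SA VA"
    and "measurement_on SB VB"
  shows "can_infer V v VA vA VB vB \<longleftrightarrow>
           (VB \<subseteq> sumsp (commute_part V VA) VA \<and>
            coset (perp (commute_part V VA)) v \<inter> coset (perp VA) vA \<inter> coset (perp VB) vB \<noteq> {})"
proof -
  \<comment> \<open>Only the subspace structure of \<open>V\<close> and \<open>VA\<close> matters.\<close>
  define W where "W = commute_part V VA"
  define U where "U = sumsp W VA"
  define S where "S = coset (perp W) v \<inter> coset (perp VA) vA"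
  have U: "is_subspace U"
    using assms(1,2) is_subspace_sumsp is_subspace_commute_part
    unfolding U_def W_def valid_state_def measurement_on_def isotropic_def by blast
  have agree: "x \<in> coset (perp VB) vB \<longleftrightarrow> y \<in> coset (perp VB) vB"
    if "VB \<subseteq> U" "x \<in> S" "y \<in> S" for x y
  proof -
    have "\<forall>f\<in>VB. val f x = val f y"
      using that val_eq_on_sumsp[of x W v VA vA y] unfolding S_def U_def by blast
    then show ?thesis
      unfolding mem_coset_perp_iff by simp
  qed
  have "can_infer V v VA vA VB vB \<longleftrightarrow> S \<noteq> {} \<and> (\<forall>v'\<in>S. occurs_certainly U v' VB vB)"
    unfolding can_infer_def Let_def S_def U_def W_def by blast
  also have "\<dots> \<longleftrightarrow> S \<noteq> {} \<and> VB \<subseteq> U \<and> S \<subseteq> coset (perp VB) vB"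
    unfolding occurs_certainly_iff[OF U] by blast
  also have "\<dots> \<longleftrightarrow> VB \<subseteq> U \<and> S \<inter> coset (perp VB) vB \<noteq> {}"
    using agree by blast
  finally show ?thesis
    unfolding S_def U_def W_def .
qed

end
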